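(* For any two strongly connected weighted directed graphs $G_R,G_M$ on the same vertex set $V$ and any $r>0$, $$f_{G_R,G_M}(r)\le 1-f_{G_M,G_R}\!\left(\tfrac1r\right),$$ where $f_{A,B}(s)$ denotes the fixation probability of the two-graph Moran process with resident graph $A$, mutant graph $B$, and mutant relative fitness $s$.
   Context: Two-graph Moran process: vertex set $V=\{1,\dots,n\}$; resident graph $G_R=(V,E_R)$ and mutant graph $G_M=(V,E_M)$, strongly connected, with row-stochastic weight matrices $W_R=[w^R_{ij}]$, $W_M=[w^M_{ij}]$ ($w^R_{ij}>0$ iff $(i,j)\in E_R$, similarly for $M$). The state is the mutant set $S$; residents have fitness $1$, mutants fitness $r>0$. Each step a vertex $i$ is chosen with probability proportional to fitness; if $i$ is a mutant, it picks $j$ with probability $w^M_{ij}$ and $j$ becomes a mutant; if a resident, it picks $j$ with probability $w^R_{ij}$ and $j$ becomes a resident. Absorption at $S=\emptyset$ (extinction) or $S=V$ (fixation). The fixation probability $f_{G_R,G_M}(r)=\frac1n\sum_{u\in V}f(\{u\})$, where $f(S)$ is the probability of fixation starting from mutant set $S$. *)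

theory Defs
  imports Complex_Main
begin

text \<open>Vertices are the elements of a finite type 'v (so V = UNIV, n = CARD('v)).
  A weight matrix is a function 'v => 'v => real.\<close>

definition row_stochastic :: "('v::finite \<Rightarrow> 'v \<Rightarrow> real) \<Rightarrow> bool" where
  "row_stochastic W \<longleftrightarrow> (\<forall>i j. 0 \<le> W i j) \<and> (\<forall>i. (\<Sum>j\<in>UNIV. W i j) = 1)"

definition edges :: "('v \<Rightarrow> 'v \<Rightarrow> real) \<Rightarrow> ('v \<times> 'v) set" where
  "edges W = {(i, j). 0 < W i j}"

definition strongly_connected :: "('v \<Rightarrow> 'v \<Rightarrow> real) \<Rightarrow> bool" where
  "strongly_connected W \<longleftrightarrow> (\<forall>i j. (i, j) \<in> (edges W)\<^sup>*)"

text \<open>Fitness of vertex i in state S (S = set of mutants).\<close>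
definition fitness :: "real \<Rightarrow> 'v set \<Rightarrow> 'v \<Rightarrow> real" where
  "fitness r S i = (if i \<in> S then r else 1)"

definition step :: "'v set \<Rightarrow> 'v \<Rightarrow> 'v \<Rightarrow> 'v set" where
  "step S i j = (if i \<in> S then insert j S else S - {j})"

definition trans :: "('v::finite \<Rightarrow> 'v \<Rightarrow> real) \<Rightarrow> ('v \<Rightarrow> 'v \<Rightarrow> real) \<Rightarrow> real
    \<Rightarrow> 'v set \<Rightarrow> 'v set \<Rightarrow> real" where
  "trans WR WM r S T =
     (\<Sum>i\<in>UNIV. \<Sum>j\<in>UNIV.
        (fitness r S i / (\<Sum>k\<in>UNIV. fitness r S k)) *
        (if i \<in> S then WM i j else WR i j) *
        (if step S i j = T then 1 else 0))"

text \<open>Probability that the process started in S is in state V (= UNIV) after k steps.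
  Since V is absorbing, this equals the probability of fixation by time k.\<close>
fun fix_by :: "('v::finite \<Rightarrow> 'v \<Rightarrow> real) \<Rightarrow> ('v \<Rightarrow> 'v \<Rightarrow> real) \<Rightarrow> real
    \<Rightarrow> nat \<Rightarrow> 'v set \<Rightarrow> real" where
  "fix_by WR WM r 0 S = (if S = UNIV then 1 else 0)"
| "fix_by WR WM r (Suc k) S = (\<Sum>T\<in>UNIV. trans WR WM r S T * fix_by WR WM r k T)"

definition fix_prob :: "('v::finite \<Rightarrow> 'v \<Rightarrow> real) \<Rightarrow> ('v \<Rightarrow> 'v \<Rightarrow> real) \<Rightarrow> real
    \<Rightarrow> 'v set \<Rightarrow> real" where
  "fix_prob WR WM r S = lim (\<lambda>k. fix_by WR WM r k S)"

definition fixation :: "('v::finite \<Rightarrow> 'v \<Rightarrow> real) \<Rightarrow> ('v \<Rightarrow> 'v \<Rightarrow> real) \<Rightarrow> real \<Rightarrow> real" where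
  "fixation WR WM r = (1 / real (card (UNIV :: 'v set))) * (\<Sum>u\<in>UNIV. fix_prob WR WM r {u})"

end

theory Submission
  imports Defs
begin

(* Exchanging the roles of mutants and residents, S |-> V - S, turns the process (G_R, G_M, r)
   into (G_M, G_R, 1/r). Hence f_{G_M,G_R}(1/r)({v}) is the probability that (G_R, G_M, r)
   started in V - {v} dies out, and for u /= v monotonicity of fixation in the initial mutant set
   gives  f({u}) + f_{G_M,G_R}(1/r)({v}) <= f(V - {v}) + P(extinction from V - {v}) <= 1.
   Averaging over all pairs u /= v gives the claim.
   Monotonicity is proved by uniformizing time: in the lazy chain in which every vertex
   reproduces at the common rate max(1,r), thinned by its fitness, the absorption probabilities
   are unchanged and the one-step operator preserves monotone functions. *)

fun absorbed_by :: "('s::finite \<Rightarrow> 's \<Rightarrow> real) \<Rightarrow> 's \<Rightarrow> nat \<Rightarrow> 's \<Rightarrow> real" where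
  "absorbed_by K a 0 s = (if s = a then 1 else 0)"
| "absorbed_by K a (Suc k) s = (\<Sum>t\<in>UNIV. K s t * absorbed_by K a k t)"

definition absorption_prob :: "('s::finite \<Rightarrow> 's \<Rightarrow> real) \<Rightarrow> 's \<Rightarrow> 's \<Rightarrow> real" where
  "absorption_prob K a s = lim (\<lambda>k. absorbed_by K a k s)"

lemma row_stochastic_sum_mono:
  assumes "row_stochastic K" "\<And>t. f t \<le> g t"
  shows "(\<Sum>t\<in>UNIV. K s t * f t) \<le> (\<Sum>t\<in>UNIV. K s t * g t)"
  using assms unfolding row_stochastic_def by (intro sum_mono mult_left_mono) auto

lemma row_stochastic_sum_const:
  assumes "row_stochastic K"
  shows "(\<Sum>t\<in>UNIV. K s t * c) = c"
  using assms unfolding row_stochastic_def by (simp add: sum_distrib_right[symmetric])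

lemma row_stochastic_absorbing_row:
  assumes "row_stochastic K" "K a a = 1" "t \<noteq> a"
  shows "K a t = 0"
proof -
  have "(\<Sum>t\<in>UNIV. K a t) = K a a + (\<Sum>t\<in>UNIV - {a}. K a t)"
    by (simp add: sum.remove)
  then have "(\<Sum>t\<in>UNIV - {a}. K a t) = 0"
    using assms(1,2) unfolding row_stochastic_def by simp
  moreover have "\<forall>t\<in>UNIV - {a}. 0 \<le> K a t"
    using assms(1) unfolding row_stochastic_def by blast
  ultimately show ?thesis
    using assms(3) sum_nonneg_eq_0_iff[of "UNIV - {a}" "K a"] by simp
qed

lemma absorbed_by_bounds:
  assumes "row_stochastic K"
  shows "0 \<le> absorbed_by K a k s \<and> absorbed_by K a k s \<le> 1"
proof (induction k arbitrary: s)
  case 0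
  show ?case by simp
next
  case (Suc k)
  have "0 \<le> (\<Sum>t\<in>UNIV. K s t * absorbed_by K a k t)"
    using assms Suc unfolding row_stochastic_def by (intro sum_nonneg mult_nonneg_nonneg) auto
  moreover have "(\<Sum>t\<in>UNIV. K s t * absorbed_by K a k t) \<le> (\<Sum>t\<in>UNIV. K s t * 1)"
    using Suc by (intro row_stochastic_sum_mono[OF assms]) blast
  ultimately show ?case
    using assms unfolding row_stochastic_def by simp
qed

lemma absorbed_by_target:
  assumes "row_stochastic K" "K a a = 1"
  shows "absorbed_by K a k a = 1"
proof (induction k)
  case 0
  show ?case by simp
next
  case (Suc k)
  have "K a t * absorbed_by K a k t = (if t = a then 1 else 0)" for t
    by (cases "t = a") (simp_all add: Suc assms(2) row_stochastic_absorbing_row[OF assms])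
  then show ?case by simp
qed

lemma absorbed_by_Suc_mono:
  assumes "row_stochastic K" "K a a = 1"
  shows "absorbed_by K a k s \<le> absorbed_by K a (Suc k) s"
proof (induction k arbitrary: s)
  case 0
  show ?case
    using absorbed_by_target[OF assms, of "Suc 0"] absorbed_by_bounds[OF assms(1), of a "Suc 0" s]
    by (cases "s = a") auto
next
  case (Suc k)
  then show ?case
    using row_stochastic_sum_mono[OF assms(1), of "absorbed_by K a k" "absorbed_by K a (Suc k)"]
    by simp
qed

lemma absorbed_by_tendsto:
  assumes "row_stochastic K" "K a a = 1"
  shows "(\<lambda>k. absorbed_by K a k s) \<longlonglongrightarrow> absorption_prob K a s"
proof -
  have "incseq (\<lambda>k. absorbed_by K a k s)"
    using absorbed_by_Suc_mono[OF assms] by (rule incseq_SucI)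
  moreover have "\<forall>k. absorbed_by K a k s \<le> 1"
    using absorbed_by_bounds[OF assms(1)] by blast
  ultimately obtain l where "(\<lambda>k. absorbed_by K a k s) \<longlonglongrightarrow> l"
    by (rule incseq_convergent)
  then have "convergent (\<lambda>k. absorbed_by K a k s)"
    by (rule convergentI)
  then show ?thesis
    unfolding absorption_prob_def by (rule convergent_LIMSEQ_iff[THEN iffD1])
qed

lemma absorption_prob_bounds:
  assumes "row_stochastic K" "K a a = 1"
  shows "0 \<le> absorption_prob K a s \<and> absorption_prob K a s \<le> 1"
  using LIMSEQ_le_const[OF absorbed_by_tendsto[OF assms]]
    LIMSEQ_le_const2[OF absorbed_by_tendsto[OF assms]] absorbed_by_bounds[OF assms(1)]
  by blast

lemma absorption_prob_target:
  assumes "row_stochastic K" "K a a = 1"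
  shows "absorption_prob K a a = 1"
  using absorbed_by_tendsto[OF assms, of a] absorbed_by_target[OF assms]
  by (simp add: LIMSEQ_const_iff)

lemma absorption_prob_harmonic:
  assumes "row_stochastic K" "K a a = 1"
  shows "(\<Sum>t\<in>UNIV. K s t * absorption_prob K a t) = absorption_prob K a s"
proof -
  have "(\<lambda>k. absorbed_by K a (Suc k) s) \<longlonglongrightarrow> (\<Sum>t\<in>UNIV. K s t * absorption_prob K a t)"
    unfolding absorbed_by.simps
    by (intro tendsto_sum tendsto_mult tendsto_const absorbed_by_tendsto[OF assms])
  moreover have "(\<lambda>k. absorbed_by K a (Suc k) s) \<longlonglongrightarrow> absorption_prob K a s"
    using absorbed_by_tendsto[OF assms] by (rule LIMSEQ_Suc)
  ultimately show ?thesis by (rule LIMSEQ_unique)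
qed

lemma absorption_prob_le_superharmonic:
  assumes "row_stochastic K" "K a a = 1"
    and "\<And>t. 0 \<le> \<phi> t" "1 \<le> \<phi> a" "\<And>s. (\<Sum>t\<in>UNIV. K s t * \<phi> t) \<le> \<phi> s"
  shows "absorption_prob K a s \<le> \<phi> s"
proof -
  have "absorbed_by K a k s \<le> \<phi> s" for k
  proof (induction k arbitrary: s)
    case 0
    then show ?case using assms(3,4) by auto
  next
    case (Suc k)
    then show ?case
      using row_stochastic_sum_mono[OF assms(1), of "absorbed_by K a k" \<phi> s] assms(5)[of s]
      by simp
  qed
  then show ?thesis
    using LIMSEQ_le_const2[OF absorbed_by_tendsto[OF assms(1,2)]] by blast
qed

lemma absorption_prob_two_targets:
  assumes "row_stochastic K" "K a a = 1" "K b b = 1" "a \<noteq> b"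
  shows "absorption_prob K a s + absorption_prob K b s \<le> 1"
proof -
  have "absorbed_by K a k s + absorbed_by K b k s \<le> 1" for k
  proof (induction k arbitrary: s)
    case 0
    then show ?case using assms(4) by simp
  next
    case (Suc k)
    have "absorbed_by K a (Suc k) s + absorbed_by K b (Suc k) s
        = (\<Sum>t\<in>UNIV. K s t * (absorbed_by K a k t + absorbed_by K b k t))"
      by (simp add: sum.distrib algebra_simps)
    also have "\<dots> \<le> (\<Sum>t\<in>UNIV. K s t * 1)"
      by (rule row_stochastic_sum_mono[OF assms(1) Suc.IH])
    finally show ?case using assms(1) unfolding row_stochastic_def by simp
  qed
  then show ?thesis
    using LIMSEQ_le_const2[OF tendsto_add[OF absorbed_by_tendsto[OF assms(1,2)]
          absorbed_by_tendsto[OF assms(1,3)]]] by blast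
qed

lemma absorbed_by_conjugate:
  assumes "bij \<sigma>" "\<And>s t. K' (\<sigma> s) (\<sigma> t) = K s t"
  shows "absorbed_by K' (\<sigma> a) k (\<sigma> s) = absorbed_by K a k s"
proof (induction k arbitrary: s)
  case 0
  show ?case using bij_is_inj[OF assms(1)] by (simp add: inj_eq)
next
  case (Suc k)
  have "absorbed_by K' (\<sigma> a) (Suc k) (\<sigma> s)
      = (\<Sum>t\<in>UNIV. K' (\<sigma> s) (\<sigma> t) * absorbed_by K' (\<sigma> a) k (\<sigma> t))"
    using sum.reindex_bij_betw[of \<sigma> UNIV UNIV "\<lambda>t. K' (\<sigma> s) t * absorbed_by K' (\<sigma> a) k t"]
      assms(1)
    unfolding bij_def by simp
  then show ?case using Suc assms(2) by simp
qed

lemma absorption_prob_conjugate: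
  assumes "bij \<sigma>" "\<And>s t. K' (\<sigma> s) (\<sigma> t) = K s t"
  shows "absorption_prob K' (\<sigma> a) (\<sigma> s) = absorption_prob K a s"
  using absorbed_by_conjugate[of \<sigma> K' K, OF assms] by (simp add: absorption_prob_def)

definition lazy :: "('s \<Rightarrow> real) \<Rightarrow> ('s \<Rightarrow> 's \<Rightarrow> real) \<Rightarrow> 's \<Rightarrow> 's \<Rightarrow> real" where
  "lazy c K s t = c s * K s t + (if s = t then 1 - c s else 0)"

lemma sum_lazy_mult:
  "(\<Sum>t\<in>UNIV. lazy c K s t * \<phi> t) = c s * (\<Sum>t\<in>UNIV. K s t * \<phi> t) + (1 - c s) * \<phi> s"
  for K :: "'s::finite \<Rightarrow> 's \<Rightarrow> real"
proof -
  have "(\<Sum>t\<in>UNIV. lazy c K s t * \<phi> t)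
      = (\<Sum>t\<in>UNIV. c s * (K s t * \<phi> t) + (if s = t then (1 - c s) * \<phi> t else 0))"
    unfolding lazy_def by (intro sum.cong refl) (auto simp: algebra_simps)
  then show ?thesis by (simp add: sum.distrib sum_distrib_left)
qed

lemma row_stochastic_lazy:
  assumes "row_stochastic K" "\<And>s. 0 \<le> c s \<and> c s \<le> 1"
  shows "row_stochastic (lazy c K)"
  unfolding row_stochastic_def
proof safe
  show "0 \<le> lazy c K s t" for s t
    using assms unfolding row_stochastic_def lazy_def by (simp add: add_nonneg_nonneg)
  show "(\<Sum>t\<in>UNIV. lazy c K s t) = 1" for s
    using sum_lazy_mult[of c K s "\<lambda>_. 1"] row_stochastic_sum_const[OF assms(1), of s 1] by simp
qed

lemma absorption_prob_lazy:
  assumes "row_stochastic K" "K a a = 1" "\<And>s. 0 < c s \<and> c s \<le> 1"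
  shows "absorption_prob (lazy c K) a = absorption_prob K a"
proof -
  let ?L = "lazy c K"
  have L: "row_stochastic ?L" "?L a a = 1"
    using row_stochastic_lazy[OF assms(1)] assms(2,3) by (auto simp: lazy_def less_imp_le)
  have "absorption_prob ?L a s \<le> absorption_prob K a s" for s
  proof (rule absorption_prob_le_superharmonic[OF L])
    show "(\<Sum>t\<in>UNIV. ?L s t * absorption_prob K a t) \<le> absorption_prob K a s" for s
      unfolding sum_lazy_mult absorption_prob_harmonic[OF assms(1,2)] by (simp add: algebra_simps)
  qed (use absorption_prob_bounds[OF assms(1,2)] absorption_prob_target[OF assms(1,2)] in auto)
  moreover have "absorption_prob K a s \<le> absorption_prob ?L a s" for s
  proof (rule absorption_prob_le_superharmonic[OF assms(1,2)])
    show "(\<Sum>t\<in>UNIV. K s t * absorption_prob ?L a t) \<le> absorption_prob ?L a s" for s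
      using absorption_prob_harmonic[OF L, of s] assms(3)[of s]
      unfolding sum_lazy_mult by (simp add: algebra_simps)
  qed (use absorption_prob_bounds[OF L] absorption_prob_target[OF L] in auto)
  ultimately show ?thesis by (intro ext antisym)
qed

lemma absorption_prob_mono:
  fixes K :: "'s::{finite,order_top} \<Rightarrow> 's \<Rightarrow> real"
  assumes "row_stochastic K" "K top top = 1"
    and "\<And>\<phi>. mono \<phi> \<Longrightarrow> mono (\<lambda>s. \<Sum>t\<in>UNIV. K s t * \<phi> t)"
  shows "mono (absorption_prob K top)"
proof -
  have absorbed_by_mono: "mono (absorbed_by K top k)" for k
  proof (induction k)
    case 0
    show ?case by (auto intro!: monoI simp: top_le)
  next
    case (Suc k)
    then show ?case using assms(3)[OF Suc] by simp
  qed
  show ?thesis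
  proof (rule monoI)
    fix s s' :: 's
    assume "s \<le> s'"
    then have "\<forall>k. absorbed_by K top k s \<le> absorbed_by K top k s'"
      using absorbed_by_mono monoD by blast
    then show "absorption_prob K top s \<le> absorption_prob K top s'"
      by (intro LIMSEQ_le[OF absorbed_by_tendsto[OF assms(1,2)] absorbed_by_tendsto[OF assms(1,2)]])
        auto
  qed
qed

definition total_fitness :: "real \<Rightarrow> 'v::finite set \<Rightarrow> real" where
  "total_fitness r S = (\<Sum>k\<in>UNIV. fitness r S k)"

lemma total_fitness_pos: "0 < r \<Longrightarrow> 0 < total_fitness r S"
  unfolding total_fitness_def fitness_def by (intro sum_pos) auto

lemma total_fitness_le: "total_fitness r (S::'v::finite set) \<le> real (card (UNIV :: 'v set)) * max 1 r"
  using sum_bounded_above[of UNIV "fitness r S" "max 1 r"]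
  unfolding total_fitness_def fitness_def by auto

lemma sum_trans_mult:
  "(\<Sum>T\<in>UNIV. trans WR WM r S T * \<phi> T) =
   (\<Sum>i\<in>UNIV. \<Sum>j\<in>UNIV. fitness r S i / total_fitness r S *
      (if i \<in> S then WM i j else WR i j) * \<phi> (step S i j))"
proof -
  have "(\<Sum>T\<in>UNIV. trans WR WM r S T * \<phi> T) =
    (\<Sum>T\<in>UNIV. \<Sum>i\<in>UNIV. \<Sum>j\<in>UNIV. fitness r S i / total_fitness r S *
      (if i \<in> S then WM i j else WR i j) * (if step S i j = T then \<phi> T else 0))"
    unfolding trans_def total_fitness_def sum_distrib_right by (intro sum.cong refl) auto
  also have "\<dots> = (\<Sum>i\<in>UNIV. \<Sum>j\<in>UNIV. \<Sum>T\<in>UNIV. fitness r S i / total_fitness r S *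
      (if i \<in> S then WM i j else WR i j) * (if step S i j = T then \<phi> T else 0))"
    by (subst sum.swap) (intro sum.cong refl sum.swap)
  also have "\<dots> = (\<Sum>i\<in>UNIV. \<Sum>j\<in>UNIV. fitness r S i / total_fitness r S *
      (if i \<in> S then WM i j else WR i j) * \<phi> (step S i j))"
    by (intro sum.cong refl) (simp add: if_distrib[of "\<lambda>x. _ * x"] cong: if_cong)
  finally show ?thesis .
qed

lemma row_stochastic_trans:
  assumes "row_stochastic WR" "row_stochastic WM" "0 < r"
  shows "row_stochastic (trans WR WM r)"
  unfolding row_stochastic_def
proof safe
  show "0 \<le> trans WR WM r S T" for S T
    using assms total_fitness_pos[OF assms(3), of S]
    unfolding trans_def row_stochastic_def total_fitness_def fitness_def
    by (intro sum_nonneg mult_nonneg_nonneg divide_nonneg_pos) auto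
  have row: "(\<Sum>j\<in>UNIV. (if i \<in> S then WM i j else WR i j)) = 1" for S i
    using assms(1,2) unfolding row_stochastic_def by (cases "i \<in> S") simp_all
  show "(\<Sum>T\<in>UNIV. trans WR WM r S T) = 1" for S
  proof -
    have "(\<Sum>T\<in>UNIV. trans WR WM r S T * 1) = (\<Sum>i\<in>UNIV. fitness r S i / total_fitness r S *
        (\<Sum>j\<in>UNIV. (if i \<in> S then WM i j else WR i j)))"
      unfolding sum_trans_mult by (simp add: sum_distrib_left)
    also have "\<dots> = total_fitness r S / total_fitness r S"
      unfolding row by (simp add: total_fitness_def sum_divide_distrib[symmetric])
    finally show ?thesis using total_fitness_pos[OF assms(3), of S] by simp
  qed
qed

lemma trans_stationary_state:
  assumes "row_stochastic WR" "row_stochastic WM" "0 < r" "\<And>i j. step S i j = S"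
  shows "trans WR WM r S S = 1"
proof -
  have "trans WR WM r S S = (\<Sum>T\<in>UNIV. trans WR WM r S T * 1)"
    unfolding sum_trans_mult by (simp add: trans_def total_fitness_def assms(4))
  then show ?thesis
    using row_stochastic_trans[OF assms(1-3)] unfolding row_stochastic_def by simp
qed

lemma fix_prob_eq_absorption_prob: "fix_prob WR WM r = absorption_prob (trans WR WM r) UNIV"
proof -
  have "fix_by WR WM r k S = absorbed_by (trans WR WM r) UNIV k S" for k S
    by (induction k arbitrary: S) simp_all
  then show ?thesis by (simp add: fun_eq_iff fix_prob_def absorption_prob_def)
qed

lemma trans_compl:
  assumes "0 < r"
  shows "trans WM WR (1/r) (- A) (- B) = trans WR WM r (A::'v::finite set) B"
proof -
  have fitness_compl: "fitness (1/r) (- A) i = fitness r A i / r" for i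
    using assms unfolding fitness_def by auto
  have "fitness (1/r) (- A) i / (\<Sum>k\<in>UNIV. fitness (1/r) (- A) k)
      = fitness r A i / (\<Sum>k\<in>UNIV. fitness r A k)" for i
    using assms unfolding fitness_compl by (simp add: sum_divide_distrib[symmetric])
  moreover have "step (- A) i j = - step A i j" for i j
    unfolding step_def by auto
  ultimately show ?thesis unfolding trans_def by (intro sum.cong refl) auto
qed

lemma fix_prob_swap_compl:
  assumes "0 < r"
  shows "fix_prob WM WR (1/r) (- A) = absorption_prob (trans WR WM r) {} (A::'v::finite set)"
proof -
  have "bij (uminus :: 'v set \<Rightarrow> 'v set)"
    by (rule o_bij[of uminus]) (auto simp: fun_eq_iff)
  from absorption_prob_conjugate[OF this, of "trans WM WR (1/r)" "trans WR WM r" "{}" A]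
  show ?thesis by (simp add: fix_prob_eq_absorption_prob trans_compl[OF assms])
qed

lemma fix_prob_add_swap_compl_le:
  assumes "row_stochastic WR" "row_stochastic WM" "0 < r"
  shows "fix_prob WR WM r A + fix_prob WM WR (1/r) (- A) \<le> 1"
  unfolding fix_prob_swap_compl[OF assms(3)] fix_prob_eq_absorption_prob[of WR WM r]
  by (intro absorption_prob_two_targets row_stochastic_trans trans_stationary_state assms)
    (auto simp: step_def)

(* Total fitness is at most n max(1,r), so the laziness rate lies in (0,1]. *)
definition lazy_trans :: "('v::finite \<Rightarrow> 'v \<Rightarrow> real) \<Rightarrow> ('v \<Rightarrow> 'v \<Rightarrow> real) \<Rightarrow> real
    \<Rightarrow> 'v set \<Rightarrow> 'v set \<Rightarrow> real" where
  "lazy_trans WR WM r =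
     lazy (\<lambda>S. total_fitness r S / (real (card (UNIV :: 'v set)) * max 1 r)) (trans WR WM r)"

(* max(1,r) times the expectation of phi after the clock of vertex i rings: i reproduces with
   probability fitness / max(1,r) and otherwise nothing happens. *)
definition ring_value :: "('v::finite \<Rightarrow> 'v \<Rightarrow> real) \<Rightarrow> ('v \<Rightarrow> 'v \<Rightarrow> real) \<Rightarrow> real
    \<Rightarrow> ('v set \<Rightarrow> real) \<Rightarrow> 'v set \<Rightarrow> 'v \<Rightarrow> real" where
  "ring_value WR WM r \<phi> S i =
     fitness r S i * (\<Sum>j\<in>UNIV. (if i \<in> S then WM i j else WR i j) * \<phi> (step S i j))
     + (max 1 r - fitness r S i) * \<phi> S"

lemma sum_lazy_trans_mult:
  assumes "0 < r"
  shows "real (card (UNIV :: 'v set)) * max 1 r * (\<Sum>T\<in>UNIV. lazy_trans WR WM r S T * \<phi> T)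
    = (\<Sum>i\<in>UNIV. ring_value WR WM r \<phi> (S::'v::finite set) i)"
proof -
  let ?N = "real (card (UNIV :: 'v set)) * max 1 r"
  have N: "0 < ?N" by (simp add: card_gt_0_iff)
  have trans_part: "total_fitness r S * (\<Sum>T\<in>UNIV. trans WR WM r S T * \<phi> T) =
     (\<Sum>i\<in>UNIV. fitness r S i * (\<Sum>j\<in>UNIV. (if i \<in> S then WM i j else WR i j) * \<phi> (step S i j)))"
    unfolding sum_trans_mult sum_distrib_left using total_fitness_pos[OF assms, of S]
    by (intro sum.cong refl) (simp add: field_simps)
  have idle_part: "?N - total_fitness r S = (\<Sum>i\<in>UNIV. max 1 r - fitness r S i)"
    unfolding total_fitness_def by (simp add: sum_subtractf)
  have "?N * (\<Sum>T\<in>UNIV. lazy_trans WR WM r S T * \<phi> T) = ?N *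
      (total_fitness r S / ?N * (\<Sum>T\<in>UNIV. trans WR WM r S T * \<phi> T)
       + (1 - total_fitness r S / ?N) * \<phi> S)"
    unfolding lazy_trans_def sum_lazy_mult ..
  also have "\<dots> = total_fitness r S * (\<Sum>T\<in>UNIV. trans WR WM r S T * \<phi> T)
      + (?N - total_fitness r S) * \<phi> S"
    using N by (simp add: field_simps)
  also have "\<dots> = (\<Sum>i\<in>UNIV. ring_value WR WM r \<phi> S i)"
    unfolding trans_part idle_part ring_value_def by (simp add: sum.distrib sum_distrib_right)
  finally show ?thesis .
qed

lemma ring_value_mono:
  assumes "row_stochastic WR" "row_stochastic WM" "0 < r" "S \<subseteq> S'" "mono \<phi>"
  shows "ring_value WR WM r \<phi> S i \<le> ring_value WR WM r \<phi> S' i"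
proof -
  have \<phi>S: "\<phi> S \<le> \<phi> S'" using assms(4,5) by (rule monoD[rotated])
  have M: "1 \<le> max 1 r" "r \<le> max 1 r" by auto
  consider "i \<in> S" | "i \<notin> S'" | "i \<in> S' - S" using assms(4) by blast
  then show ?thesis
  proof cases
    case 1
    have "(\<Sum>j\<in>UNIV. WM i j * \<phi> (insert j S)) \<le> (\<Sum>j\<in>UNIV. WM i j * \<phi> (insert j S'))"
      using assms(4,5) by (intro row_stochastic_sum_mono[OF assms(2)] monoD[of \<phi>]) auto
    then have "r * (\<Sum>j\<in>UNIV. WM i j * \<phi> (insert j S)) + (max 1 r - r) * \<phi> S
        \<le> r * (\<Sum>j\<in>UNIV. WM i j * \<phi> (insert j S')) + (max 1 r - r) * \<phi> S'"
      using assms(3) M \<phi>S by (intro add_mono mult_left_mono) auto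
    then show ?thesis using 1 assms(4) unfolding ring_value_def fitness_def step_def by auto
  next
    case 2
    have "(\<Sum>j\<in>UNIV. WR i j * \<phi> (S - {j})) \<le> (\<Sum>j\<in>UNIV. WR i j * \<phi> (S' - {j}))"
      using assms(4,5) by (intro row_stochastic_sum_mono[OF assms(1)] monoD[of \<phi>]) auto
    then have "1 * (\<Sum>j\<in>UNIV. WR i j * \<phi> (S - {j})) + (max 1 r - 1) * \<phi> S
        \<le> 1 * (\<Sum>j\<in>UNIV. WR i j * \<phi> (S' - {j})) + (max 1 r - 1) * \<phi> S'"
      using M \<phi>S by (intro add_mono mult_left_mono) auto
    then show ?thesis using 2 assms(4) unfolding ring_value_def fitness_def step_def by auto
  next
    case 3
    have "(\<Sum>j\<in>UNIV. WR i j * \<phi> (S - {j})) \<le> (\<Sum>j\<in>UNIV. WR i j * \<phi> S)"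
      using assms(5) by (intro row_stochastic_sum_mono[OF assms(1)] monoD[of \<phi>]) auto
    then have "1 * (\<Sum>j\<in>UNIV. WR i j * \<phi> (S - {j})) + (max 1 r - 1) * \<phi> S \<le> max 1 r * \<phi> S"
      using row_stochastic_sum_const[OF assms(1)] by (simp add: algebra_simps)
    also have "\<dots> \<le> max 1 r * \<phi> S'" using \<phi>S M by (intro mult_left_mono) auto
    also have "\<dots> = r * (\<Sum>j\<in>UNIV. WM i j * \<phi> S') + (max 1 r - r) * \<phi> S'"
      using row_stochastic_sum_const[OF assms(2)] by (simp add: algebra_simps)
    also have "\<dots> \<le> r * (\<Sum>j\<in>UNIV. WM i j * \<phi> (insert j S')) + (max 1 r - r) * \<phi> S'"
      using assms(3,5) by (intro add_mono mult_left_mono row_stochastic_sum_mono[OF assms(2)]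
          monoD[of \<phi>]) auto
    finally show ?thesis using 3 unfolding ring_value_def fitness_def step_def by auto
  qed
qed

lemma fix_prob_mono:
  assumes "row_stochastic WR" "row_stochastic WM" "0 < r"
  shows "mono (fix_prob WR WM (r::real) :: 'v::finite set \<Rightarrow> real)"
proof -
  let ?N = "real (card (UNIV :: 'v set)) * max 1 r"
  have N: "0 < ?N" by (simp add: card_gt_0_iff)
  have rate: "0 < total_fitness r S / ?N \<and> total_fitness r S / ?N \<le> 1" for S :: "'v set"
    using N total_fitness_pos[OF assms(3), of S] total_fitness_le[of r S] by simp
  have K: "row_stochastic (trans WR WM r)" "trans WR WM r top top = 1"
    using row_stochastic_trans[OF assms] trans_stationary_state[OF assms]
    by (auto simp: step_def)
  have "mono (absorption_prob (lazy_trans WR WM r) top)"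
  proof (rule absorption_prob_mono)
    show "row_stochastic (lazy_trans WR WM r)" "lazy_trans WR WM r top top = 1"
      unfolding lazy_trans_def using row_stochastic_lazy[OF K(1)] rate K(2)
      by (auto simp: lazy_def less_imp_le)
    show "mono (\<lambda>S. \<Sum>T\<in>UNIV. lazy_trans WR WM r S T * \<phi> T)" if "mono \<phi>" for \<phi>
    proof (rule monoI)
      fix S S' :: "'v set"
      assume "S \<le> S'"
      then have "?N * (\<Sum>T\<in>UNIV. lazy_trans WR WM r S T * \<phi> T)
          \<le> ?N * (\<Sum>T\<in>UNIV. lazy_trans WR WM r S' T * \<phi> T)"
        unfolding sum_lazy_trans_mult[OF assms(3)]
        by (intro sum_mono ring_value_mono assms that) auto
      then show "(\<Sum>T\<in>UNIV. lazy_trans WR WM r S T * \<phi> T)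
          \<le> (\<Sum>T\<in>UNIV. lazy_trans WR WM r S' T * \<phi> T)"
        by (rule mult_left_le_imp_le[OF _ N])
    qed
  qed
  then show ?thesis
    unfolding lazy_trans_def absorption_prob_lazy[OF K rate] fix_prob_eq_absorption_prob by simp
qed

lemma sum_le_card_minus_sum:
  fixes h f :: "'a::finite \<Rightarrow> real"
  assumes "2 \<le> card (UNIV :: 'a set)" "\<And>u v. u \<noteq> v \<Longrightarrow> h u + f v \<le> 1"
  shows "sum h UNIV \<le> real (card (UNIV :: 'a set)) - sum f UNIV"
proof -
  let ?n = "real (card (UNIV :: 'a set))"
  have card: "real (card (UNIV - {u :: 'a})) = ?n - 1" for u
    using assms(1) by (simp add: card_Diff_singleton of_nat_diff)
  have "(\<Sum>v\<in>UNIV - {u}. h u + f v) = (?n - 1) * h u + (sum f UNIV - f u)" for u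
    using assms(1) by (simp add: sum.distrib sum_diff1 of_nat_diff)
  then have "(\<Sum>u\<in>UNIV. \<Sum>v\<in>UNIV - {u}. h u + f v)
      = (\<Sum>u\<in>UNIV. (?n - 1) * h u + (sum f UNIV - f u))"
    by (intro sum.cong refl)
  also have "\<dots> = (?n - 1) * (sum h UNIV + sum f UNIV)"
    by (simp add: sum.distrib sum_subtractf sum_distrib_left[symmetric] sum_distrib_right[symmetric]
        algebra_simps)
  finally have "(\<Sum>u\<in>UNIV. \<Sum>v\<in>UNIV - {u}. h u + f v) = (?n - 1) * (sum h UNIV + sum f UNIV)" .
  moreover have "(\<Sum>u\<in>UNIV. \<Sum>v\<in>UNIV - {u}. h u + f v) \<le> (\<Sum>u\<in>UNIV. \<Sum>v\<in>UNIV - {u :: 'a}. 1)"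
    by (intro sum_mono) (use assms(2) in auto)
  moreover have "(\<Sum>u\<in>UNIV. \<Sum>v\<in>UNIV - {u :: 'a}. 1) = (?n - 1) * ?n"
    using card by simp
  ultimately have "(?n - 1) * (sum h UNIV + sum f UNIV) \<le> (?n - 1) * ?n"
    by (simp add: mult.commute)
  then show ?thesis using assms(1) by simp
qed

theorem lemma1:
  fixes WR WM :: "'v::finite \<Rightarrow> 'v \<Rightarrow> real" and r :: real
  assumes "card (UNIV :: 'v set) \<ge> 2"
    and "row_stochastic WR" and "row_stochastic WM"
    and "strongly_connected WR" and "strongly_connected WM"
    and "r > 0"
  shows "fixation WR WM r \<le> 1 - fixation WM WR (1 / r)"
proof -
  have "fix_prob WR WM r {u} + fix_prob WM WR (1/r) {v} \<le> 1" if "u \<noteq> v" for u v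
  proof -
    have "fix_prob WR WM r {u} \<le> fix_prob WR WM r (- {v})"
      using that by (intro monoD[OF fix_prob_mono[OF assms(2,3,6)]]) auto
    moreover have "fix_prob WR WM r (- {v}) + fix_prob WM WR (1/r) (- (- {v})) \<le> 1"
      by (rule fix_prob_add_swap_compl_le[OF assms(2,3,6)])
    ultimately show ?thesis by simp
  qed
  then have "(\<Sum>u\<in>UNIV. fix_prob WR WM r {u})
      \<le> real (card (UNIV :: 'v set)) - (\<Sum>v\<in>UNIV. fix_prob WM WR (1/r) {v})"
    by (rule sum_le_card_minus_sum[OF assms(1)])
  then show ?thesis
    using assms(1) unfolding fixation_def by (simp add: field_simps)
qed

end
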